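(* Let $A\in\mathbb{R}^{n\times n}$, $B\in\mathbb{R}^{n\times m}$, $0\le\gamma\le1$. Let $(D^*,E^*,d^* )$ be true cost parameters and $(D^\dagger,E^\dagger,d^\dagger)$ falsified cost parameters ($D$'s symmetric positive semidefinite, $E$'s symmetric positive definite, $d$'s in $\mathbb{R}^n$). For each of the two parameter sets, let $P$ be the positive definite solution of $P=D+\gamma A'PA-\gamma^2A'PB(E+\gamma B'PB)^{-1}B'PA$, $K=-\gamma(E+\gamma B'PB)^{-1}B'PA$, $h$ the solution of $h=d+\gamma(A+BK)'h$, and $$k=-\tfrac{\gamma}{2}(E+\gamma B'PB)^{-1}B'h;$$ denote these by $P^*,K^*,h^*,k^*$ for the true parameters and $P^\dagger,K^\dagger,h^\dagger,k^\dagger$ for the falsified ones. Suppose $\|E^\dagger-E^*\|\le\lambda_{\min}(E^* )/2$. Then $$\|k^\dagger-k^*\|\le\Gamma_7\|E^\dagger-E^*\|+\Gamma_8\|P^\dagger-P^*\|+\Gamma_9\|h^\dagger-h^*\|,$$ where $\Gamma_7=\frac{4}{\lambda_{\min}(E^* )}\|k^*\|$, $\Gamma_8=\frac{4\gamma}{\lambda_{\min}(E^* )}\|k^*\|\,\|B\|^2$, and $\Gamma_9=\frac{4\gamma}{\lambda_{\min}(E^* )}\|B\|$.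
   Context: Prime denotes transpose; $\|\cdot\|$ is the Euclidean norm for vectors and spectral norm for matrices; $\lambda_{\min}$ is the smallest eigenvalue. $(K,k)$ characterizes the optimal affine policy $u=Kx+k$ of the discounted LQG problem with dynamics $x_{t+1}=Ax_t+Bu_t+Cw_t$ and stage cost $x'Dx+d'x+r+u'Eu$. *)

theory Defs
  imports "HOL-Analysis.Analysis"
begin

definition spec_norm :: "real^'n^'m \<Rightarrow> real" where
  "spec_norm M = onorm (\<lambda>x. M *v x)"

definition lambda_min :: "real^'n^'n \<Rightarrow> real" where
  "lambda_min M = Min {l. \<exists>v. v \<noteq> 0 \<and> M *v v = l *\<^sub>R v}"

definition sym_mat :: "real^'n^'n \<Rightarrow> bool" where
  "sym_mat M \<longleftrightarrow> transpose M = M"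

definition psd_mat :: "real^'n^'n \<Rightarrow> bool" where
  "psd_mat M \<longleftrightarrow> sym_mat M \<and> (\<forall>x. 0 \<le> x \<bullet> (M *v x))"

definition pd_mat :: "real^'n^'n \<Rightarrow> bool" where
  "pd_mat M \<longleftrightarrow> sym_mat M \<and> (\<forall>x. x \<noteq> 0 \<longrightarrow> 0 < x \<bullet> (M *v x))"

definition Gmat :: "real \<Rightarrow> real^'m^'n \<Rightarrow> real^'m^'m \<Rightarrow> real^'n^'n \<Rightarrow> real^'m^'m" where
  "Gmat \<gamma> B E P = E + \<gamma> *\<^sub>R (transpose B ** P ** B)"

definition riccati :: "real \<Rightarrow> real^'n^'n \<Rightarrow> real^'m^'n \<Rightarrow> real^'n^'n \<Rightarrow> real^'m^'m \<Rightarrow> real^'n^'n \<Rightarrow> bool" where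
  "riccati \<gamma> A B D E P \<longleftrightarrow>
     P = D + \<gamma> *\<^sub>R (transpose A ** P ** A)
         - \<gamma>\<^sup>2 *\<^sub>R (transpose A ** P ** B ** matrix_inv (Gmat \<gamma> B E P) ** transpose B ** P ** A)"

definition gainK :: "real \<Rightarrow> real^'n^'n \<Rightarrow> real^'m^'n \<Rightarrow> real^'m^'m \<Rightarrow> real^'n^'n \<Rightarrow> real^'n^'m" where
  "gainK \<gamma> A B E P = - \<gamma> *\<^sub>R (matrix_inv (Gmat \<gamma> B E P) ** transpose B ** P ** A)"

definition h_eq :: "real \<Rightarrow> real^'n^'n \<Rightarrow> real^'m^'n \<Rightarrow> real^'n^'m \<Rightarrow> real^'n \<Rightarrow> real^'n \<Rightarrow> bool" where
  "h_eq \<gamma> A B K d h \<longleftrightarrow> h = d + \<gamma> *\<^sub>R (transpose (A + B ** K) *v h)"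

definition offset_k :: "real \<Rightarrow> real^'m^'n \<Rightarrow> real^'m^'m \<Rightarrow> real^'n^'n \<Rightarrow> real^'n \<Rightarrow> real^'m" where
  "offset_k \<gamma> B E P h = - (\<gamma> / 2) *\<^sub>R (matrix_inv (Gmat \<gamma> B E P) *v (transpose B *v h))"

end

theory Submission
  imports Defs
begin

text \<open>
  With \<open>G = E + \<gamma> B'PB\<close> we have \<open>G k = -(\<gamma>/2) B'h\<close> for both parameter sets. Subtracting
  the two equations gives
  \<open>G\<^sup>\<dagger>(k\<^sup>\<dagger> - k\<^sup>*) = -(\<gamma>/2) B'(h\<^sup>\<dagger> - h\<^sup>*) - (E\<^sup>\<dagger> - E\<^sup>*) k\<^sup>* - \<gamma> B'(P\<^sup>\<dagger> - P\<^sup>*) B k\<^sup>*\<close>,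
  and \<open>x'G\<^sup>\<dagger>x \<ge> x'E\<^sup>\<dagger>x \<ge> (\<lambda>\<^sub>m\<^sub>i\<^sub>n(E\<^sup>*) - \<parallel>E\<^sup>\<dagger> - E\<^sup>*\<parallel>) \<parallel>x\<parallel>\<^sup>2 \<ge> \<lambda>\<^sub>m\<^sub>i\<^sub>n(E\<^sup>*)/2 \<parallel>x\<parallel>\<^sup>2\<close>,
  so \<open>\<parallel>G\<^sup>\<dagger>x\<parallel> \<ge> \<lambda>\<^sub>m\<^sub>i\<^sub>n(E\<^sup>*)/2 \<parallel>x\<parallel>\<close>. Taking norms yields the bound even with \<open>2\<close> in place
  of \<open>4\<close>.
\<close>

lemma transpose_mult_inner:
  fixes M :: "real^'n^'m"
  shows "(transpose M *v x) \<bullet> y = x \<bullet> (M *v y)"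
  by (simp add: dot_lmul_matrix)

lemma sym_mat_inner_commute: "sym_mat M \<Longrightarrow> (M *v x) \<bullet> y = x \<bullet> (M *v y)"
  using transpose_mult_inner[of M x y] unfolding sym_mat_def by simp

lemma spec_norm_nonneg: "0 \<le> spec_norm M"
  unfolding spec_norm_def by (rule onorm_pos_le) simp

lemma norm_mult_le_spec_norm: "norm (M *v x) \<le> spec_norm M * norm x"
  unfolding spec_norm_def by (rule onorm) simp

lemma norm_transpose_mult_le_spec_norm:
  fixes M :: "real^'n^'m"
  shows "norm (transpose M *v x) \<le> spec_norm M * norm x"
proof -
  let ?y = "transpose M *v x"
  have "norm ?y * norm ?y = x \<bullet> (M *v ?y)"
    using transpose_mult_inner[of M x ?y] by (metis dot_square_norm power2_eq_square)
  also have "\<dots> \<le> norm x * norm (M *v ?y)" by (rule norm_cauchy_schwarz)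
  also have "\<dots> \<le> (spec_norm M * norm x) * norm ?y"
    using mult_left_mono[OF norm_mult_le_spec_norm[of M ?y] norm_ge_zero[of x]] by (simp add: mult_ac)
  finally show ?thesis
    using spec_norm_nonneg[of M] by (cases "?y = 0") (auto simp: mult_le_cancel_right)
qed

lemma psd_mat_kernel:
  assumes "psd_mat M" "x \<bullet> (M *v x) = 0"
  shows "M *v x = 0"
proof (rule ccontr)
  define w where "w = M *v x"
  define c where "c = w \<bullet> (M *v w)"
  assume "M *v x \<noteq> 0"
  then have w_pos: "0 < w \<bullet> w" by (simp add: w_def)
  have c_nonneg: "0 \<le> c" using assms(1) by (simp add: c_def psd_mat_def)
  have sym: "w \<bullet> (M *v x) = x \<bullet> (M *v w)"
    using sym_mat_inner_commute[of M x w] assms(1) by (simp add: psd_mat_def inner_commute)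
  text \<open>The form is nonnegative along the line \<open>x - t w\<close>, but its slope there at \<open>t = 0\<close> is
    \<open>-2 \<parallel>w\<parallel>\<^sup>2 < 0\<close>.\<close>
  define t where "t = (w \<bullet> w) / (c + 1)"
  have t_pos: "0 < t" using w_pos c_nonneg by (simp add: t_def)
  have "0 \<le> (x - t *\<^sub>R w) \<bullet> (M *v (x - t *\<^sub>R w))"
    using assms(1) by (simp add: psd_mat_def)
  also have "\<dots> = t * (t * c - 2 * (w \<bullet> w))"
    using assms(2) sym
    by (simp add: c_def w_def[symmetric] matrix_vector_mult_diff_distrib matrix_vector_mult_scaleR
        inner_diff_left inner_diff_right algebra_simps)
  finally have "2 * (w \<bullet> w) \<le> t * c"
    using t_pos by (simp add: zero_le_mult_iff)
  moreover have "t * c < w \<bullet> w"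
    using w_pos c_nonneg by (simp add: t_def field_simps)
  ultimately show False using w_pos by linarith
qed

lemma sym_mat_min_eigenpair:
  fixes E :: "real^'m^'m"
  assumes "sym_mat E"
  shows "\<exists>\<mu> v. v \<noteq> 0 \<and> E *v v = \<mu> *\<^sub>R v \<and> (\<forall>x. \<mu> * (x \<bullet> x) \<le> x \<bullet> (E *v x))"
proof -
  have "sphere (0::real^'m) 1 \<noteq> {}"
    by (metis norm_axis_1 mem_sphere_0 empty_iff)
  moreover have "continuous_on (sphere 0 1) (\<lambda>x. x \<bullet> (E *v x))"
    by (intro continuous_intros linear_continuous_on) simp
  ultimately obtain v where v: "norm v = 1"
    and v_min: "\<And>y. norm y = 1 \<Longrightarrow> v \<bullet> (E *v v) \<le> y \<bullet> (E *v y)"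
    using continuous_attains_inf[of "sphere (0::real^'m) 1" "\<lambda>x. x \<bullet> (E *v x)"] by auto
  define \<mu> where "\<mu> = v \<bullet> (E *v v)"
  have \<mu>_le: "\<mu> * (x \<bullet> x) \<le> x \<bullet> (E *v x)" for x
  proof (cases "x = 0")
    case False
    let ?u = "(1 / norm x) *\<^sub>R x"
    have "\<mu> \<le> ?u \<bullet> (E *v ?u)" unfolding \<mu>_def using False by (intro v_min) simp
    also have "\<dots> = (x \<bullet> (E *v x)) / (x \<bullet> x)"
      by (simp add: matrix_vector_mult_scaleR dot_square_norm power2_eq_square)
    finally show ?thesis using False by (simp add: field_simps)
  qed simp
  define M where "M = E - \<mu> *\<^sub>R mat 1"
  have M_mult: "M *v x = E *v x - \<mu> *\<^sub>R x" for x
    by (simp add: M_def matrix_vector_mult_diff_rdistrib scaleR_matrix_vector_assoc[symmetric])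
  have "sym_mat M"
    using assms by (simp add: sym_mat_def M_def transpose_def vec_eq_iff mat_def)
  moreover have "0 \<le> x \<bullet> (M *v x)" for x
    using \<mu>_le[of x] by (simp add: M_mult inner_diff_right)
  ultimately have "psd_mat M" by (simp add: psd_mat_def)
  moreover have "v \<bullet> (M *v v) = 0"
    using v by (simp add: M_mult inner_diff_right \<mu>_def norm_eq_1)
  ultimately have "M *v v = 0" by (rule psd_mat_kernel)
  then have "E *v v = \<mu> *\<^sub>R v" by (simp add: M_mult)
  then show ?thesis using v \<mu>_le by (intro exI[of _ \<mu>] exI[of _ v]) auto
qed

text \<open>Needed because \<^const>\<open>lambda_min\<close> is a \<^const>\<open>Min\<close>, which is junk on infinite sets.
  Eigenvectors for distinct eigenvalues are orthogonal, hence independent.\<close>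
lemma finite_eigenvalues_sym_mat:
  fixes E :: "real^'m^'m"
  assumes "sym_mat E"
  shows "finite {l. \<exists>v. v \<noteq> 0 \<and> E *v v = l *\<^sub>R v}" (is "finite ?S")
proof -
  define f where "f l = (SOME v. v \<noteq> 0 \<and> E *v v = l *\<^sub>R v)" for l
  have f: "f l \<noteq> 0 \<and> E *v f l = l *\<^sub>R f l" if "l \<in> ?S" for l
    using someI_ex[of "\<lambda>v. v \<noteq> 0 \<and> E *v v = l *\<^sub>R v"] that by (simp add: f_def)
  have inj: "inj_on f ?S"
  proof (rule inj_onI)
    fix l l' assume l: "l \<in> ?S" and l': "l' \<in> ?S" and eq: "f l = f l'"
    have "l *\<^sub>R f l = E *v f l'" using f[OF l] eq by simp
    also have "\<dots> = l' *\<^sub>R f l" using f[OF l'] eq by simp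
    finally show "l = l'" using f[OF l] by (simp add: scaleR_cancel_right)
  qed
  have "finite (f ` ?S)"
  proof (rule independent_imp_finite, rule pairwise_orthogonal_independent)
    show "pairwise orthogonal (f ` ?S)"
    proof (rule pairwiseI)
      fix x y assume "x \<in> f ` ?S" "y \<in> f ` ?S" "x \<noteq> y"
      then obtain l l' where ll: "l \<in> ?S" "l' \<in> ?S" "x = f l" "y = f l'" by blast
      have "l * (x \<bullet> y) = (E *v x) \<bullet> y" using f[OF ll(1)] ll(3) by simp
      also have "\<dots> = x \<bullet> (E *v y)" by (rule sym_mat_inner_commute[OF assms])
      also have "\<dots> = l' * (x \<bullet> y)" using f[OF ll(2)] ll(4) by simp
      finally have "(l - l') * (x \<bullet> y) = 0" by (simp add: left_diff_distrib)
      moreover have "l \<noteq> l'" using \<open>x \<noteq> y\<close> ll(3,4) by blast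
      ultimately show "orthogonal x y" by (simp add: orthogonal_def)
    qed
    show "0 \<notin> f ` ?S"
    proof
      assume "0 \<in> f ` ?S"
      then obtain l where "l \<in> ?S" "0 = f l" by (rule imageE)
      then show False using f by metis
    qed
  qed
  then show ?thesis using inj by (rule finite_imageD)
qed

lemma
  fixes E :: "real^'m^'m"
  assumes "sym_mat E"
  shows lambda_min_le_inner: "lambda_min E * (x \<bullet> x) \<le> x \<bullet> (E *v x)"
    and lambda_min_eigenvector: "\<exists>v. v \<noteq> 0 \<and> E *v v = lambda_min E *\<^sub>R v"
proof -
  obtain \<mu> v where v: "v \<noteq> 0" "E *v v = \<mu> *\<^sub>R v"
    and \<mu>_le: "\<And>x. \<mu> * (x \<bullet> x) \<le> x \<bullet> (E *v x)"
    using sym_mat_min_eigenpair[OF assms] by blast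
  have "\<mu> \<le> l" if "v' \<noteq> 0" "E *v v' = l *\<^sub>R v'" for l v'
    using \<mu>_le[of v'] that by (simp add: mult_le_cancel_right)
  then have "lambda_min E = \<mu>"
    unfolding lambda_min_def using v
    by (intro Min_eqI finite_eigenvalues_sym_mat[OF assms]) auto
  then show "lambda_min E * (x \<bullet> x) \<le> x \<bullet> (E *v x)"
    and "\<exists>v. v \<noteq> 0 \<and> E *v v = lambda_min E *\<^sub>R v"
    using \<mu>_le v by auto
qed

lemma pd_mat_inner_nonneg: "pd_mat P \<Longrightarrow> 0 \<le> x \<bullet> (P *v x)"
  unfolding pd_mat_def by (cases "x = 0") (auto intro: less_imp_le)

lemma lambda_min_pos:
  assumes "pd_mat E"
  shows "0 < lambda_min E"
proof -
  obtain v where v: "v \<noteq> 0" "E *v v = lambda_min E *\<^sub>R v"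
    using assms lambda_min_eigenvector by (auto simp: pd_mat_def)
  have "0 < v \<bullet> (E *v v)" using assms v(1) by (simp add: pd_mat_def)
  then have "0 < lambda_min E * (v \<bullet> v)" using v(2) by simp
  moreover have "0 < v \<bullet> v" using v(1) by simp
  ultimately show ?thesis by (simp add: zero_less_mult_iff)
qed

lemma lambda_min_perturbed_le_inner:
  assumes "sym_mat E"
  shows "(lambda_min E - spec_norm (E' - E)) * (x \<bullet> x) \<le> x \<bullet> (E' *v x)"
proof -
  have "\<bar>x \<bullet> ((E' - E) *v x)\<bar> \<le> norm x * norm ((E' - E) *v x)"
    by (rule Cauchy_Schwarz_ineq2)
  also have "\<dots> \<le> norm x * (spec_norm (E' - E) * norm x)"
    by (rule mult_left_mono[OF norm_mult_le_spec_norm norm_ge_zero])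
  also have "\<dots> = spec_norm (E' - E) * (x \<bullet> x)"
    by (simp add: dot_square_norm power2_eq_square)
  finally have "- (spec_norm (E' - E) * (x \<bullet> x)) \<le> x \<bullet> ((E' - E) *v x)"
    by (simp add: abs_le_iff)
  moreover have "x \<bullet> (E' *v x) = x \<bullet> (E *v x) + x \<bullet> ((E' - E) *v x)"
    by (simp add: matrix_vector_mult_diff_rdistrib inner_diff_right)
  moreover have "(lambda_min E - spec_norm (E' - E)) * (x \<bullet> x)
      = lambda_min E * (x \<bullet> x) - spec_norm (E' - E) * (x \<bullet> x)"
    by (rule left_diff_distrib)
  ultimately show ?thesis
    using lambda_min_le_inner[OF assms, of x] by linarith
qed

lemma norm_mult_ge_of_coercive:
  assumes "\<And>x. c * (x \<bullet> x) \<le> x \<bullet> (G *v x)"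
  shows "c * norm x \<le> norm (G *v x)"
proof (cases "c \<le> 0 \<or> x = 0")
  case False
  have "norm x * (c * norm x) \<le> norm x * norm (G *v x)"
    using assms[of x] norm_cauchy_schwarz[of x "G *v x"]
    by (simp add: dot_square_norm power2_eq_square mult_ac)
  then show ?thesis using False by simp
qed (auto intro: order_trans[OF mult_nonpos_nonneg])

lemma matrix_inv_right_of_pos_form:
  fixes G :: "real^'m^'m"
  assumes "\<And>x. x \<noteq> 0 \<Longrightarrow> 0 < x \<bullet> (G *v x)"
  shows "G *v (matrix_inv G *v y) = y"
proof -
  have "\<forall>x. G *v x = 0 \<longrightarrow> x = 0" using assms by fastforce
  then have "invertible G"
    using matrix_left_invertible_ker invertible_left_inverse by blast
  then have "G ** matrix_inv G = mat 1"
    unfolding invertible_def matrix_inv_def by (rule someI_ex[THEN conjunct1])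
  then show ?thesis by (metis matrix_vector_mul_assoc matrix_vector_mul_lid)
qed

lemma Gmat_mult: "Gmat \<gamma> B E P *v x = E *v x + \<gamma> *\<^sub>R (transpose B *v (P *v (B *v x)))"
  by (simp add: Gmat_def matrix_vector_mult_add_rdistrib matrix_vector_mul_assoc matrix_mul_assoc
      scaleR_matrix_vector_assoc[symmetric])

lemma inner_Gmat_mult:
  fixes B :: "real^'m^'n"
  shows "x \<bullet> (Gmat \<gamma> B E P *v x) = x \<bullet> (E *v x) + \<gamma> * ((B *v x) \<bullet> (P *v (B *v x)))"
  using transpose_mult_inner[of B "P *v (B *v x)" x]
  by (simp add: Gmat_mult inner_add_right inner_commute)

lemma inner_Gmat_mult_ge:
  assumes "pd_mat P" "0 \<le> \<gamma>"
  shows "x \<bullet> (E *v x) \<le> x \<bullet> (Gmat \<gamma> B E P *v x)"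
  using assms pd_mat_inner_nonneg[OF assms(1), of "B *v x"] by (simp add: inner_Gmat_mult)

lemma Gmat_offset_k:
  assumes "pd_mat E" "pd_mat P" "0 \<le> \<gamma>"
  shows "Gmat \<gamma> B E P *v offset_k \<gamma> B E P h = - (\<gamma> / 2) *\<^sub>R (transpose B *v h)"
proof -
  have G_pos: "0 < x \<bullet> (Gmat \<gamma> B E P *v x)" if "x \<noteq> 0" for x
  proof -
    have "0 < x \<bullet> (E *v x)" using assms(1) that by (simp add: pd_mat_def)
    then show ?thesis using inner_Gmat_mult_ge[OF assms(2,3), of x E B] by linarith
  qed
  have "Gmat \<gamma> B E P *v (matrix_inv (Gmat \<gamma> B E P) *v y) = y" for y
    by (rule matrix_inv_right_of_pos_form) (rule G_pos)
  then show ?thesis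
    by (simp only: offset_k_def matrix_vector_mult_scaleR)
qed

lemma Gmat_offset_k_diff:
  fixes B :: "real^'m^'n" and h :: "real^'n"
  assumes "pd_mat E" "pd_mat P" "pd_mat E'" "pd_mat P'" "0 \<le> \<gamma>"
  defines "k \<equiv> offset_k \<gamma> B E P h"
  shows "Gmat \<gamma> B E' P' *v (offset_k \<gamma> B E' P' h' - k)
    = - ((\<gamma> / 2) *\<^sub>R (transpose B *v (h' - h)) + (E' - E) *v k
         + \<gamma> *\<^sub>R (transpose B *v ((P' - P) *v (B *v k))))"
proof -
  let ?k' = "offset_k \<gamma> B E' P' h'" and ?Bt = "transpose B"
  have "E *v k + \<gamma> *\<^sub>R (?Bt *v (P *v (B *v k))) + (\<gamma> / 2) *\<^sub>R (?Bt *v h) = 0"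
    using Gmat_offset_k[OF assms(1,2,5), of B h] unfolding k_def[symmetric] Gmat_mult
    by (simp del: transpose_matrix_vector)
  moreover have "Gmat \<gamma> B E' P' *v (?k' - k)
    = - (\<gamma> / 2) *\<^sub>R (?Bt *v h') - (E' *v k + \<gamma> *\<^sub>R (?Bt *v (P' *v (B *v k))))"
    using Gmat_offset_k[OF assms(3-5), of B h']
    by (simp only: matrix_vector_mult_diff_distrib Gmat_mult[of \<gamma> B E' P' k])
  ultimately show ?thesis
    by (simp add: matrix_vector_mult_diff_distrib matrix_vector_mult_diff_rdistrib
        algebra_simps del: transpose_matrix_vector)
qed

lemma norm_offset_k_residual_le:
  fixes B :: "real^'m^'n"
  assumes "0 \<le> \<gamma>"
  shows "norm ((\<gamma> / 2) *\<^sub>R (transpose B *v u) + F *v k + \<gamma> *\<^sub>R (transpose B *v (Q *v (B *v k))))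
    \<le> (\<gamma> / 2) * spec_norm B * norm u + spec_norm F * norm k
      + \<gamma> * (spec_norm B)\<^sup>2 * spec_norm Q * norm k"
proof -
  let ?a = "(\<gamma> / 2) *\<^sub>R (transpose B *v u)" and ?b = "F *v k"
    and ?c = "\<gamma> *\<^sub>R (transpose B *v (Q *v (B *v k)))"
  have a: "norm ?a \<le> (\<gamma> / 2) * spec_norm B * norm u"
    using mult_left_mono[OF norm_transpose_mult_le_spec_norm[of B u], of "\<gamma> / 2"] assms
    by (simp add: mult.assoc)
  have "norm (transpose B *v (Q *v (B *v k))) \<le> spec_norm B * (spec_norm Q * (spec_norm B * norm k))"
    using norm_transpose_mult_le_spec_norm[of B] norm_mult_le_spec_norm[of Q]
      norm_mult_le_spec_norm[of B k] spec_norm_nonneg[of B] spec_norm_nonneg[of Q]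
    by (meson mult_left_mono order_trans)
  then have "\<gamma> * norm (transpose B *v (Q *v (B *v k)))
      \<le> \<gamma> * (spec_norm B * (spec_norm Q * (spec_norm B * norm k)))"
    by (rule mult_left_mono[OF _ assms])
  then have c: "norm ?c \<le> \<gamma> * (spec_norm B)\<^sup>2 * spec_norm Q * norm k"
    using assms by (simp add: power2_eq_square mult_ac del: transpose_matrix_vector)
  have "norm (?a + ?b + ?c) \<le> norm ?a + norm ?b + norm ?c"
    by (intro norm_triangle_le add_right_mono norm_triangle_ineq)
  then show ?thesis
    using a c norm_mult_le_spec_norm[of F k] by linarith
qed

lemma offset_k_perturbation:
  fixes B :: "real^'m^'n" and h :: "real^'n"
  assumes "pd_mat E" "pd_mat P" "pd_mat E'" "pd_mat P'" "0 \<le> \<gamma>"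
    and coercive: "\<And>x. c * (x \<bullet> x) \<le> x \<bullet> (Gmat \<gamma> B E' P' *v x)"
  defines "k \<equiv> offset_k \<gamma> B E P h"
  shows "c * norm (offset_k \<gamma> B E' P' h' - k)
    \<le> (\<gamma> / 2) * spec_norm B * norm (h' - h) + spec_norm (E' - E) * norm k
      + \<gamma> * (spec_norm B)\<^sup>2 * spec_norm (P' - P) * norm k"
proof -
  have "c * norm (offset_k \<gamma> B E' P' h' - k) \<le> norm (Gmat \<gamma> B E' P' *v (offset_k \<gamma> B E' P' h' - k))"
    by (rule norm_mult_ge_of_coercive[OF coercive])
  also have "\<dots> = norm ((\<gamma> / 2) *\<^sub>R (transpose B *v (h' - h)) + (E' - E) *v k
         + \<gamma> *\<^sub>R (transpose B *v ((P' - P) *v (B *v k))))"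
    unfolding k_def by (simp only: Gmat_offset_k_diff[OF assms(1-5)] norm_minus_cancel)
  also have "\<dots> \<le> (\<gamma> / 2) * spec_norm B * norm (h' - h) + spec_norm (E' - E) * norm k
      + \<gamma> * (spec_norm B)\<^sup>2 * spec_norm (P' - P) * norm k"
    by (rule norm_offset_k_residual_le[OF assms(5)])
  finally show ?thesis .
qed

theorem theorem2:
  fixes A :: "real^'n^'n" and B :: "real^'m^'n" and \<gamma> :: real
    and Ds Dd Ps Pd :: "real^'n^'n" and Es Ed :: "real^'m^'m"
    and ds dd hs hd :: "real^'n"
  assumes "0 \<le> \<gamma>" "\<gamma> \<le> 1"
    and "psd_mat Ds" "psd_mat Dd" "pd_mat Es" "pd_mat Ed"
    and "pd_mat Ps" "riccati \<gamma> A B Ds Es Ps"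
    and "pd_mat Pd" "riccati \<gamma> A B Dd Ed Pd"
    and "h_eq \<gamma> A B (gainK \<gamma> A B Es Ps) ds hs"
    and "h_eq \<gamma> A B (gainK \<gamma> A B Ed Pd) dd hd"
    and "spec_norm (Ed - Es) \<le> lambda_min Es / 2"
  shows "norm (offset_k \<gamma> B Ed Pd hd - offset_k \<gamma> B Es Ps hs)
    \<le> (4 / lambda_min Es) * norm (offset_k \<gamma> B Es Ps hs) * spec_norm (Ed - Es)
     + (4 * \<gamma> / lambda_min Es) * norm (offset_k \<gamma> B Es Ps hs) * (spec_norm B)\<^sup>2 * spec_norm (Pd - Ps)
     + (4 * \<gamma> / lambda_min Es) * spec_norm B * norm (hd - hs)"
proof -
  define L where "L = lambda_min Es"
  define k where "k = offset_k \<gamma> B Es Ps hs"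
  define a where "a = spec_norm (Ed - Es) * norm k"
  define b where "b = \<gamma> * (spec_norm B)\<^sup>2 * spec_norm (Pd - Ps) * norm k"
  define c where "c = \<gamma> * spec_norm B * norm (hd - hs)"
  have L_pos: "0 < L" unfolding L_def by (rule lambda_min_pos) fact
  have coercive: "L / 2 * (x \<bullet> x) \<le> x \<bullet> (Gmat \<gamma> B Ed Pd *v x)" for x
  proof -
    have "L / 2 * (x \<bullet> x) \<le> (L - spec_norm (Ed - Es)) * (x \<bullet> x)"
      using assms(13) by (intro mult_right_mono) (simp_all add: L_def)
    also have "\<dots> \<le> x \<bullet> (Ed *v x)"
      unfolding L_def using assms(5) by (intro lambda_min_perturbed_le_inner) (simp add: pd_mat_def)
    also have "\<dots> \<le> x \<bullet> (Gmat \<gamma> B Ed Pd *v x)" by (rule inner_Gmat_mult_ge) fact+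
    finally show ?thesis .
  qed
  have "0 \<le> a" "0 \<le> b" "0 \<le> c"
    using assms(1) by (simp_all add: a_def b_def c_def spec_norm_nonneg)
  have "L / 2 * norm (offset_k \<gamma> B Ed Pd hd - k) \<le> c / 2 + a + b"
    using offset_k_perturbation[OF assms(5,7,6,9,1) coercive] by (simp add: k_def a_def b_def c_def)
  then have "L * norm (offset_k \<gamma> B Ed Pd hd - k) \<le> c + 2 * a + 2 * b"
    by (simp add: field_simps)
  also have "\<dots> \<le> 4 * (a + b + c)"
    using \<open>0 \<le> a\<close> \<open>0 \<le> b\<close> \<open>0 \<le> c\<close> by simp
  finally show ?thesis
    using L_pos by (simp add: L_def[symmetric] k_def[symmetric] a_def b_def c_def field_simps)
qed

end
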